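(* For a triangle-free graph $G$ without isolated vertices, the following are equivalent: (1) $G$ is localizable; (2) $G$ is very well-covered; (3) $G$ has a perfect matching every edge of which is a strong clique; (4) $G$ has a perfect matching, and every edge of every perfect matching of $G$ is a strong clique.
   Context: A clique is strong if it intersects every maximal independent set. A graph is localizable if its vertex set admits a partition into strong cliques. A graph is well-covered if all its maximal independent sets have the same size, and very well-covered if it is well-covered, has no isolated vertices, and its independence number equals $|V(G)|/2$. *)

theory Defs
  imports Main "HOL-Library.Disjoint_Sets"
begin

definition graph :: "'a set \<Rightarrow> ('a \<Rightarrow> 'a \<Rightarrow> bool) \<Rightarrow> bool" where
  "graph V E \<longleftrightarrow> finite V \<and> (\<forall>u v. E u v \<longrightarrow> u \<in> V \<and> v \<in> V)
     \<and> (\<forall>u v. E u v \<longrightarrow> E v u) \<and> (\<forall>v. \<not> E v v)"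

definition independent_set :: "'a set \<Rightarrow> ('a \<Rightarrow> 'a \<Rightarrow> bool) \<Rightarrow> 'a set \<Rightarrow> bool" where
  "independent_set V E S \<longleftrightarrow> S \<subseteq> V \<and> (\<forall>u\<in>S. \<forall>v\<in>S. \<not> E u v)"

definition maximal_independent_set :: "'a set \<Rightarrow> ('a \<Rightarrow> 'a \<Rightarrow> bool) \<Rightarrow> 'a set \<Rightarrow> bool" where
  "maximal_independent_set V E S \<longleftrightarrow> independent_set V E S \<and>
     (\<forall>T. independent_set V E T \<and> S \<subseteq> T \<longrightarrow> T = S)"

definition clique :: "'a set \<Rightarrow> ('a \<Rightarrow> 'a \<Rightarrow> bool) \<Rightarrow> 'a set \<Rightarrow> bool" where
  "clique V E C \<longleftrightarrow> C \<subseteq> V \<and> (\<forall>u\<in>C. \<forall>v\<in>C. u \<noteq> v \<longrightarrow> E u v)"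

definition strong_clique :: "'a set \<Rightarrow> ('a \<Rightarrow> 'a \<Rightarrow> bool) \<Rightarrow> 'a set \<Rightarrow> bool" where
  "strong_clique V E C \<longleftrightarrow> clique V E C \<and>
     (\<forall>S. maximal_independent_set V E S \<longrightarrow> C \<inter> S \<noteq> {})"

definition localizable :: "'a set \<Rightarrow> ('a \<Rightarrow> 'a \<Rightarrow> bool) \<Rightarrow> bool" where
  "localizable V E \<longleftrightarrow> (\<exists>P. partition_on V P \<and> (\<forall>C\<in>P. strong_clique V E C))"

definition independence_number :: "'a set \<Rightarrow> ('a \<Rightarrow> 'a \<Rightarrow> bool) \<Rightarrow> nat" where
  "independence_number V E = Max (card ` {S. independent_set V E S})"

definition well_covered :: "'a set \<Rightarrow> ('a \<Rightarrow> 'a \<Rightarrow> bool) \<Rightarrow> bool" where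
  "well_covered V E \<longleftrightarrow> (\<forall>S T. maximal_independent_set V E S \<and> maximal_independent_set V E T
     \<longrightarrow> card S = card T)"

definition isolated_vertex :: "'a set \<Rightarrow> ('a \<Rightarrow> 'a \<Rightarrow> bool) \<Rightarrow> 'a \<Rightarrow> bool" where
  "isolated_vertex V E v \<longleftrightarrow> v \<in> V \<and> (\<forall>u. \<not> E v u)"

definition no_isolated_vertices :: "'a set \<Rightarrow> ('a \<Rightarrow> 'a \<Rightarrow> bool) \<Rightarrow> bool" where
  "no_isolated_vertices V E \<longleftrightarrow> (\<forall>v\<in>V. \<not> isolated_vertex V E v)"

definition very_well_covered :: "'a set \<Rightarrow> ('a \<Rightarrow> 'a \<Rightarrow> bool) \<Rightarrow> bool" where
  "very_well_covered V E \<longleftrightarrow> well_covered V E \<and> no_isolated_vertices V E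
     \<and> 2 * independence_number V E = card V"

definition triangle_free :: "'a set \<Rightarrow> ('a \<Rightarrow> 'a \<Rightarrow> bool) \<Rightarrow> bool" where
  "triangle_free V E \<longleftrightarrow> \<not> (\<exists>u v w. E u v \<and> E v w \<and> E u w)"

definition perfect_matching :: "'a set \<Rightarrow> ('a \<Rightarrow> 'a \<Rightarrow> bool) \<Rightarrow> 'a set set \<Rightarrow> bool" where
  "perfect_matching V E M \<longleftrightarrow> (\<forall>e\<in>M. \<exists>u v. e = {u, v} \<and> E u v)
     \<and> (\<forall>e\<in>M. \<forall>f\<in>M. e \<noteq> f \<longrightarrow> e \<inter> f = {}) \<and> \<Union>M = V"

end

theory Submission
  imports Defs
begin

text \<open>In a triangle-free graph without isolated vertices every strong clique is an edge, so a
  partition into strong cliques is the same as a perfect matching of strong edges. Given a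
  perfect matching M, every independent set meets each edge of M at most once, so it has
  exactly |M| = |V|/2 vertices if and only if it meets every edge. Hence a matching of strong
  edges makes all maximal independent sets have size |V|/2, and conversely in a very
  well-covered graph every edge of every perfect matching is strong. It remains to see that a
  very well-covered graph has a perfect matching, which follows from the bound 2\<alpha> \<le> |V| for
  well-covered graphs without isolated vertices and its equality case.\<close>

definition neighbours :: "('a \<Rightarrow> 'a \<Rightarrow> bool) \<Rightarrow> 'a \<Rightarrow> 'a set" where
  "neighbours E x = {u. E x u}"

definition restrict_edges :: "('a \<Rightarrow> 'a \<Rightarrow> bool) \<Rightarrow> 'a set \<Rightarrow> 'a \<Rightarrow> 'a \<Rightarrow> bool" where
  "restrict_edges E W a b \<longleftrightarrow> E a b \<and> a \<in> W \<and> b \<in> W"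

lemma graph_restrict_edges: "graph V E \<Longrightarrow> W \<subseteq> V \<Longrightarrow> graph W (restrict_edges E W)"
  unfolding graph_def restrict_edges_def by (blast intro: finite_subset)

lemma independent_set_finite: "graph V E \<Longrightarrow> independent_set V E S \<Longrightarrow> finite S"
  unfolding graph_def independent_set_def by (blast intro: finite_subset)

lemma independent_set_subset: "independent_set V E S \<Longrightarrow> T \<subseteq> S \<Longrightarrow> independent_set V E T"
  unfolding independent_set_def by blast

lemma finite_independent_sets: "graph V E \<Longrightarrow> finite {S. independent_set V E S}"
  by (rule finite_subset[of _ "Pow V"]) (auto simp: graph_def independent_set_def)

lemma maximal_independent_set_iff:
  assumes "graph V E"
  shows "maximal_independent_set V E S \<longleftrightarrow>
    independent_set V E S \<and> (\<forall>v\<in>V - S. \<exists>u\<in>S. E v u)"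
proof
  assume max: "maximal_independent_set V E S"
  then have ind: "independent_set V E S" by (simp add: maximal_independent_set_def)
  have "\<exists>u\<in>S. E v u" if v: "v \<in> V - S" for v
  proof (rule ccontr)
    assume "\<not> (\<exists>u\<in>S. E v u)"
    then have "independent_set V E (insert v S)"
      using v ind assms by (auto simp: independent_set_def graph_def)
    then show False using max v by (auto simp: maximal_independent_set_def)
  qed
  with ind show "independent_set V E S \<and> (\<forall>v\<in>V - S. \<exists>u\<in>S. E v u)" by blast
next
  assume "independent_set V E S \<and> (\<forall>v\<in>V - S. \<exists>u\<in>S. E v u)"
  then show "maximal_independent_set V E S"
    unfolding maximal_independent_set_def independent_set_def by blast
qed

lemma independent_set_extends_to_maximal:
  assumes "graph V E" and "independent_set V E S"
  obtains T where "maximal_independent_set V E T" and "S \<subseteq> T"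
proof -
  let ?A = "{T. independent_set V E T \<and> S \<subseteq> T}"
  have "finite ?A"
    using finite_independent_sets[OF assms(1)] by (rule finite_subset[rotated]) blast
  moreover have "S \<in> ?A" using assms(2) by blast
  ultimately obtain T where T: "T \<in> ?A" and max: "\<forall>T'\<in>?A. T \<subseteq> T' \<longrightarrow> T = T'"
    by (meson finite_has_maximal2)
  have "maximal_independent_set V E T"
    unfolding maximal_independent_set_def using T max by blast
  with T show thesis using that by blast
qed

lemma maximal_independent_set_exists:
  assumes "graph V E"
  obtains S where "maximal_independent_set V E S"
  using independent_set_extends_to_maximal[OF assms, of "{}"]
  by (auto simp: independent_set_def)

lemma card_le_independence_number:
  "graph V E \<Longrightarrow> independent_set V E S \<Longrightarrow> card S \<le> independence_number V E"
  unfolding independence_number_def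
  by (intro Max_ge finite_imageI finite_independent_sets) auto

lemma independence_number_attained:
  assumes "graph V E"
  obtains S where "independent_set V E S" and "card S = independence_number V E"
proof -
  let ?sizes = "card ` {S. independent_set V E S}"
  have "finite ?sizes" using finite_independent_sets[OF assms] by simp
  moreover have "?sizes \<noteq> {}" by (auto simp: independent_set_def)
  ultimately have "independence_number V E \<in> ?sizes"
    unfolding independence_number_def by (rule Max_in)
  then obtain S where "independent_set V E S" and "independence_number V E = card S"
    by auto
  then show thesis by (intro that) simp_all
qed

lemma maximum_independent_set_is_maximal:
  assumes g: "graph V E" and S: "independent_set V E S"
    and card_S: "card S = independence_number V E"
  shows "maximal_independent_set V E S"
  unfolding maximal_independent_set_def
proof (intro conjI allI impI)
  fix T assume T: "independent_set V E T \<and> S \<subseteq> T"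
  then have "card T \<le> card S" using card_le_independence_number[OF g] card_S by simp
  then show "T = S"
    using card_seteq[OF independent_set_finite[OF g] _ _] T g by blast
qed (fact S)

lemma well_covered_card_maximal_independent_set:
  assumes g: "graph V E" and wc: "well_covered V E" and S: "maximal_independent_set V E S"
  shows "card S = independence_number V E"
proof -
  obtain S0 where "independent_set V E S0" and card_S0: "card S0 = independence_number V E"
    using independence_number_attained[OF g] .
  then have "maximal_independent_set V E S0"
    using maximum_independent_set_is_maximal[OF g] by blast
  then have "card S = card S0" using wc S unfolding well_covered_def by blast
  with card_S0 show ?thesis by simp
qed

lemma perfect_matching_edgeE:
  assumes "perfect_matching V E M" and "e \<in> M"
  obtains u v where "e = {u, v}" and "E u v"
  using assms by (auto simp: perfect_matching_def)

lemma perfect_matching_Union: "perfect_matching V E M \<Longrightarrow> \<Union>M = V"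
  by (simp add: perfect_matching_def)

lemma perfect_matching_disjoint:
  "perfect_matching V E M \<Longrightarrow> e \<in> M \<Longrightarrow> f \<in> M \<Longrightarrow> e \<noteq> f \<Longrightarrow> e \<inter> f = {}"
  by (simp add: perfect_matching_def)

lemma perfect_matching_edge_clique:
  assumes "graph V E" and "perfect_matching V E M" and "e \<in> M"
  shows "clique V E e"
proof -
  obtain u v where "e = {u, v}" and "E u v" using perfect_matching_edgeE[OF assms(2,3)] .
  with assms(1) show ?thesis by (auto simp: clique_def graph_def)
qed

lemma perfect_matching_finite: "graph V E \<Longrightarrow> perfect_matching V E M \<Longrightarrow> finite M"
  by (rule finite_subset[of M "Pow V"]) (auto simp: perfect_matching_def graph_def)

lemma card_perfect_matching:
  assumes g: "graph V E" and M: "perfect_matching V E M"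
  shows "card V = 2 * card M"
proof -
  have "card e = 2" if e: "e \<in> M" for e
  proof -
    obtain u v where "e = {u, v}" and "E u v" using perfect_matching_edgeE[OF M e] .
    moreover have "u \<noteq> v" using g \<open>E u v\<close> by (auto simp: graph_def)
    ultimately show ?thesis by simp
  qed
  moreover have "card (\<Union>M) = (\<Sum>e\<in>M. card e)"
  proof (rule card_Union_disjoint)
    show "pairwise disjnt M" using M by (auto simp: perfect_matching_def pairwise_def disjnt_def)
    show "finite e" if e: "e \<in> M" for e
      using perfect_matching_edgeE[OF M e] by (metis finite.emptyI finite_insert)
  qed
  ultimately show ?thesis using M by (simp add: perfect_matching_def)
qed

lemma card_independent_set_perfect_matching:
  assumes g: "graph V E" and M: "perfect_matching V E M" and S: "independent_set V E S"
  shows "card S = card {e \<in> M. e \<inter> S \<noteq> {}}"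
proof -
  have finM: "finite M" using perfect_matching_finite[OF g M] .
  have hit: "card (e \<inter> S) = (if e \<inter> S \<noteq> {} then 1 else 0)" if e: "e \<in> M" for e
  proof -
    obtain u v where uv: "e = {u, v}" "E u v" using perfect_matching_edgeE[OF M e] .
    then have "\<not> (u \<in> S \<and> v \<in> S)" using S by (auto simp: independent_set_def)
    then have "e \<inter> S = {} \<or> e \<inter> S = {u} \<or> e \<inter> S = {v}" using uv by auto
    then show ?thesis by auto
  qed
  have "S = (\<Union>e\<in>M. e \<inter> S)" using M S by (auto simp: perfect_matching_def independent_set_def)
  also have "card \<dots> = (\<Sum>e\<in>M. card (e \<inter> S))"
  proof (rule card_UN_disjoint[OF finM])
    show "\<forall>e\<in>M. finite (e \<inter> S)" using independent_set_finite[OF g S] by blast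
    show "\<forall>e\<in>M. \<forall>f\<in>M. e \<noteq> f \<longrightarrow> e \<inter> S \<inter> (f \<inter> S) = {}"
      using M by (auto simp: perfect_matching_def)
  qed
  also have "\<dots> = (\<Sum>e\<in>M. if e \<inter> S \<noteq> {} then 1 else 0)" using hit by simp
  also have "\<dots> = card {e \<in> M. e \<inter> S \<noteq> {}}"
    by (simp add: sum.inter_filter[OF finM, symmetric])
  finally show ?thesis .
qed

lemma card_independent_set_eq_perfect_matching_iff:
  assumes g: "graph V E" and M: "perfect_matching V E M" and S: "independent_set V E S"
  shows "card S = card M \<longleftrightarrow> (\<forall>e\<in>M. e \<inter> S \<noteq> {})"
proof -
  define H where "H = {e \<in> M. e \<inter> S \<noteq> {}}"
  have "H \<subseteq> M" by (auto simp: H_def)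
  then have "card H = card M \<longleftrightarrow> H = M"
    using card_subset_eq[OF perfect_matching_finite[OF g M]] by blast
  moreover have "H = M \<longleftrightarrow> (\<forall>e\<in>M. e \<inter> S \<noteq> {})" by (auto simp: H_def)
  ultimately show ?thesis
    using card_independent_set_perfect_matching[OF assms] by (simp add: H_def)
qed

text \<open>A strong clique meets some maximal independent set in a vertex u; a maximal independent set
  through a neighbour of u avoids u and so forces a second vertex x into the clique, and
  triangle-freeness leaves no room for a third.\<close>
lemma strong_clique_is_edge:
  assumes g: "graph V E" and tf: "triangle_free V E" and ni: "no_isolated_vertices V E"
    and C: "strong_clique V E C"
  obtains u x where "C = {u, x}" and "E u x"
proof -
  have cl: "C \<subseteq> V" "\<And>u v. u \<in> C \<Longrightarrow> v \<in> C \<Longrightarrow> u \<noteq> v \<Longrightarrow> E u v"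
    and meets: "\<And>S. maximal_independent_set V E S \<Longrightarrow> C \<inter> S \<noteq> {}"
    using C by (auto simp: strong_clique_def clique_def)
  obtain S0 where "maximal_independent_set V E S0" using maximal_independent_set_exists[OF g] .
  then obtain u where u: "u \<in> C" using meets by blast
  then obtain w where w: "E u w"
    using cl(1) ni by (auto simp: no_isolated_vertices_def isolated_vertex_def)
  have "independent_set V E {w}" using g w by (auto simp: independent_set_def graph_def)
  then obtain Sw where Sw: "maximal_independent_set V E Sw" "{w} \<subseteq> Sw"
    using independent_set_extends_to_maximal[OF g] by blast
  have "u \<notin> Sw" using Sw w by (auto simp: maximal_independent_set_def independent_set_def)
  then obtain x where x: "x \<in> C" "x \<noteq> u" using meets[OF Sw(1)] by blast
  have ux: "E u x" using cl(2) u x by blast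
  have "C = {u, x}"
  proof (rule ccontr)
    assume "C \<noteq> {u, x}"
    then obtain z where "z \<in> C" "z \<noteq> u" "z \<noteq> x" using u x by blast
    then have "E x z" "E u z" using cl(2) u x by auto
    then show False using tf ux by (auto simp: triangle_free_def)
  qed
  with ux that show thesis by blast
qed

lemma localizable_iff_strong_perfect_matching:
  assumes g: "graph V E" and "triangle_free V E" and "no_isolated_vertices V E"
  shows "localizable V E \<longleftrightarrow> (\<exists>M. perfect_matching V E M \<and> (\<forall>e\<in>M. strong_clique V E e))"
proof -
  have "perfect_matching V E P \<longleftrightarrow> partition_on V P" if "\<forall>C\<in>P. strong_clique V E C" for P
  proof -
    have "\<exists>u x. C = {u, x} \<and> E u x" if "C \<in> P" for C
      using strong_clique_is_edge[OF assms] \<open>\<forall>C\<in>P. strong_clique V E C\<close> that by metis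
    moreover have "{u, x} \<noteq> {}" for u x :: 'a by simp
    ultimately show ?thesis
      unfolding perfect_matching_def partition_on_def disjoint_def by metis
  qed
  then show ?thesis unfolding localizable_def by blast
qed

lemma very_well_covered_if_strong_perfect_matching:
  assumes g: "graph V E" and ni: "no_isolated_vertices V E"
    and M: "perfect_matching V E M" and strong: "\<forall>e\<in>M. strong_clique V E e"
  shows "very_well_covered V E"
proof -
  have card_max: "card S = card M" if S: "maximal_independent_set V E S" for S
  proof -
    have "independent_set V E S" using S by (simp add: maximal_independent_set_def)
    moreover have "\<forall>e\<in>M. e \<inter> S \<noteq> {}" using strong S by (simp add: strong_clique_def)
    ultimately show ?thesis using card_independent_set_eq_perfect_matching_iff[OF g M] by blast
  qed
  then have wc: "well_covered V E" by (simp add: well_covered_def)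
  obtain S where "maximal_independent_set V E S" using maximal_independent_set_exists[OF g] .
  then have "independence_number V E = card M"
    using well_covered_card_maximal_independent_set[OF g wc] card_max by metis
  then show ?thesis
    using wc ni card_perfect_matching[OF g M] by (simp add: very_well_covered_def)
qed

lemma very_well_covered_perfect_matching_strong:
  assumes g: "graph V E" and vwc: "very_well_covered V E"
    and M: "perfect_matching V E M" and e: "e \<in> M"
  shows "strong_clique V E e"
proof -
  have wc: "well_covered V E" and "2 * independence_number V E = card V"
    using vwc by (auto simp: very_well_covered_def)
  then have alpha: "independence_number V E = card M" using card_perfect_matching[OF g M] by simp
  have "e \<inter> S \<noteq> {}" if S: "maximal_independent_set V E S" for S
  proof -
    have "independent_set V E S" using S by (simp add: maximal_independent_set_def)
    moreover have "card S = card M"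
      using well_covered_card_maximal_independent_set[OF g wc S] alpha by simp
    ultimately show ?thesis using card_independent_set_eq_perfect_matching_iff[OF g M] e by blast
  qed
  then show ?thesis
    using perfect_matching_edge_clique[OF g M e] by (simp add: strong_clique_def)
qed

lemma neighbours_subset: "graph V E \<Longrightarrow> neighbours E x \<subseteq> V"
  by (auto simp: graph_def neighbours_def)

lemma twins_disjoint_neighbours:
  assumes "graph V E" and "\<forall>d\<in>D. neighbours E d = K"
  shows "D \<inter> K = {}"
  using assms by (auto simp: graph_def neighbours_def)

lemma independent_set_Un_twins:
  assumes g: "graph V E" and twins: "\<forall>d\<in>D. neighbours E d = K" and "D \<subseteq> V"
    and S: "independent_set V E S" and "S \<inter> K = {}"
  shows "independent_set V E (S \<union> D)"
proof -
  have DK: "D \<inter> K = {}" using twins_disjoint_neighbours[OF g twins] .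
  have sym: "E b a" if "E a b" for a b using g that by (simp add: graph_def)
  have "\<not> E a b" if a: "a \<in> S \<union> D" and b: "b \<in> S \<union> D" for a b
  proof
    assume ab: "E a b"
    consider "a \<in> D" | "b \<in> D" | "a \<in> S" "b \<in> S" using a b by blast
    then show False
    proof cases
      case 1 then have "b \<in> K" using ab twins by (auto simp: neighbours_def)
      then show False using b DK \<open>S \<inter> K = {}\<close> by blast
    next
      case 2 then have "a \<in> K" using sym[OF ab] twins by (auto simp: neighbours_def)
      then show False using a DK \<open>S \<inter> K = {}\<close> by blast
    next
      case 3 then show False using S ab by (auto simp: independent_set_def)
    qed
  qed
  then show ?thesis using S \<open>D \<subseteq> V\<close> by (auto simp: independent_set_def)
qed

text \<open>Swapping the part of a maximal independent set inside the common neighbourhood K for the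
  twin class D yields another independent set, of size at most that of a maximal one.\<close>
lemma well_covered_card_twins_le:
  assumes g: "graph V E" and wc: "well_covered V E"
    and twins: "\<forall>d\<in>D. neighbours E d = K" and "D \<subseteq> V" and "K \<subseteq> V" and "K \<noteq> {}"
  shows "card D \<le> card K"
proof -
  have finV: "finite V" using g by (simp add: graph_def)
  obtain k where k: "k \<in> K" using \<open>K \<noteq> {}\<close> by blast
  have "independent_set V E {k}" using k \<open>K \<subseteq> V\<close> g by (auto simp: independent_set_def graph_def)
  then obtain Y where Y: "maximal_independent_set V E Y" and "k \<in> Y"
    using independent_set_extends_to_maximal[OF g] by blast
  have indY: "independent_set V E Y" using Y by (simp add: maximal_independent_set_def)
  have "D \<inter> Y = {}"
    using twins k \<open>k \<in> Y\<close> indY by (auto simp: neighbours_def independent_set_def)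
  have "independent_set V E (Y - K)"
    using indY by (rule independent_set_subset) blast
  then have "independent_set V E ((Y - K) \<union> D)"
    using independent_set_Un_twins[OF g twins \<open>D \<subseteq> V\<close>] by blast
  then obtain Y' where Y': "maximal_independent_set V E Y'" and sub: "(Y - K) \<union> D \<subseteq> Y'"
    using independent_set_extends_to_maximal[OF g] by blast
  have finY': "finite Y'"
    using independent_set_finite[OF g] Y' by (simp add: maximal_independent_set_def)
  have finY: "finite Y" using independent_set_finite[OF g indY] .
  have "card (Y - K) + card D = card ((Y - K) \<union> D)"
    using \<open>D \<inter> Y = {}\<close> finY finite_subset[OF \<open>D \<subseteq> V\<close> finV]
    by (intro card_Un_disjoint[symmetric]) auto
  also have "\<dots> \<le> card Y'" using card_mono[OF finY' sub] .
  also have "\<dots> = card Y" using wc Y Y' unfolding well_covered_def by blast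
  also have "\<dots> \<le> card ((Y - K) \<union> K)"
    using finY finite_subset[OF \<open>K \<subseteq> V\<close> finV] by (intro card_mono) auto
  also have "\<dots> \<le> card (Y - K) + card K" by (rule card_Un_le)
  finally show ?thesis by simp
qed

lemma maximal_independent_set_Un_twins:
  assumes g: "graph V E" and twins: "\<forall>d\<in>D. neighbours E d = K" and "D \<subseteq> V" and "D \<noteq> {}"
    and J: "maximal_independent_set (V - D - K) (restrict_edges E (V - D - K)) J"
  shows "maximal_independent_set V E (J \<union> D)"
proof -
  let ?W = "V - D - K"
  have gW: "graph ?W (restrict_edges E ?W)" by (rule graph_restrict_edges[OF g]) blast
  have indJ: "independent_set ?W (restrict_edges E ?W) J"
    and dom: "\<forall>v\<in>?W - J. \<exists>u\<in>J. restrict_edges E ?W v u"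
    using J maximal_independent_set_iff[OF gW] by blast+
  have JW: "J \<subseteq> ?W" using indJ by (simp add: independent_set_def)
  have "independent_set V E J"
    using indJ JW by (auto simp: independent_set_def restrict_edges_def)
  then have ind: "independent_set V E (J \<union> D)"
    using independent_set_Un_twins[OF g twins \<open>D \<subseteq> V\<close>] JW by blast
  have "\<exists>u\<in>J \<union> D. E v u" if v: "v \<in> V - (J \<union> D)" for v
  proof (cases "v \<in> K")
    case True
    obtain d where "d \<in> D" using \<open>D \<noteq> {}\<close> by blast
    then have "E d v" using twins True by (auto simp: neighbours_def)
    then have "E v d" using g by (simp add: graph_def)
    with \<open>d \<in> D\<close> show ?thesis by blast
  next
    case False
    then have "v \<in> ?W - J" using v by blast
    then show ?thesis using dom by (auto simp: restrict_edges_def)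
  qed
  then show ?thesis using maximal_independent_set_iff[OF g] ind by blast
qed

lemma card_maximal_independent_set_remove_twins:
  assumes g: "graph V E" and twins: "\<forall>d\<in>D. neighbours E d = K" and "D \<subseteq> V" and "D \<noteq> {}"
    and card_max: "\<forall>S. maximal_independent_set V E S \<longrightarrow> card S = m"
    and J: "maximal_independent_set (V - D - K) (restrict_edges E (V - D - K)) J"
  shows "card J + card D = m"
proof -
  have finV: "finite V" using g by (simp add: graph_def)
  have "J \<subseteq> V - D - K" using J by (simp add: maximal_independent_set_def independent_set_def)
  then have "card (J \<union> D) = card J + card D"
    using finV \<open>D \<subseteq> V\<close> by (intro card_Un_disjoint) (auto intro: finite_subset)
  moreover have "card (J \<union> D) = m"
    using card_max maximal_independent_set_Un_twins[OF g twins \<open>D \<subseteq> V\<close> \<open>D \<noteq> {}\<close> J] by blast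
  ultimately show ?thesis by simp
qed

text \<open>Here the minimality of the degree of v is used: a vertex outside D \<union> K all of whose
  neighbours lie in K would have exactly the neighbourhood K and hence belong to D.\<close>
lemma no_isolated_vertices_remove_twin_class:
  assumes g: "graph V E" and min: "\<forall>x\<in>V. card (neighbours E v) \<le> card (neighbours E x)"
  defines "K \<equiv> neighbours E v" and "D \<equiv> {x \<in> V. neighbours E x = neighbours E v}"
  shows "no_isolated_vertices (V - D - K) (restrict_edges E (V - D - K))"
  unfolding no_isolated_vertices_def isolated_vertex_def
proof (intro ballI notI)
  fix x assume x: "x \<in> V - D - K" and iso: "x \<in> V - D - K \<and> (\<forall>u. \<not> restrict_edges E (V - D - K) x u)"
  have finK: "finite K"
    using g neighbours_subset[OF g] by (auto simp: K_def graph_def intro: finite_subset)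
  have "\<not> neighbours E x \<subseteq> K"
  proof
    assume sub: "neighbours E x \<subseteq> K"
    moreover have "card K \<le> card (neighbours E x)" using min x by (simp add: K_def)
    ultimately have "neighbours E x = K" using card_seteq[OF finK] by blast
    then show False using x by (simp add: D_def K_def)
  qed
  then obtain u where xu: "E x u" and "u \<notin> K" by (auto simp: neighbours_def)
  have "u \<notin> D"
  proof
    assume "u \<in> D"
    then have "neighbours E u = K" by (simp add: D_def K_def)
    moreover have "x \<in> neighbours E u" using xu g by (simp add: graph_def neighbours_def)
    ultimately have "x \<in> K" by simp
    with x show False by blast
  qed
  then have "restrict_edges E (V - D - K) x u"
    using xu x \<open>u \<notin> K\<close> g by (auto simp: restrict_edges_def graph_def)
  with iso show False by blast
qed

lemma perfect_matching_mono:
  assumes "perfect_matching V E M" and "\<And>a b. E a b \<Longrightarrow> F a b"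
  shows "perfect_matching V F M"
  using assms unfolding perfect_matching_def by metis

lemma perfect_matching_Un:
  assumes M1: "perfect_matching V1 E M1" and M2: "perfect_matching V2 E M2" and "V1 \<inter> V2 = {}"
  shows "perfect_matching (V1 \<union> V2) E (M1 \<union> M2)"
  unfolding perfect_matching_def
proof (intro conjI ballI impI)
  fix e assume "e \<in> M1 \<union> M2"
  then show "\<exists>u v. e = {u, v} \<and> E u v"
    by (metis Un_iff perfect_matching_edgeE[OF M1] perfect_matching_edgeE[OF M2])
next
  fix e f assume e: "e \<in> M1 \<union> M2" and f: "f \<in> M1 \<union> M2" and "e \<noteq> f"
  have "e \<subseteq> V1" if "e \<in> M1" for e using that perfect_matching_Union[OF M1] by blast
  moreover have "e \<subseteq> V2" if "e \<in> M2" for e using that perfect_matching_Union[OF M2] by blast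
  ultimately show "e \<inter> f = {}"
    using e f \<open>e \<noteq> f\<close> \<open>V1 \<inter> V2 = {}\<close>
      perfect_matching_disjoint[OF M1] perfect_matching_disjoint[OF M2] by blast
next
  show "\<Union>(M1 \<union> M2) = V1 \<union> V2"
    using perfect_matching_Union[OF M1] perfect_matching_Union[OF M2] by simp
qed

lemma perfect_matching_complete_bipartite:
  assumes "finite D" and "finite K" and "card D = card K" and "D \<inter> K = {}"
    and complete: "\<And>d k. d \<in> D \<Longrightarrow> k \<in> K \<Longrightarrow> E d k"
  obtains M where "perfect_matching (D \<union> K) E M"
proof -
  obtain f where f: "bij_betw f D K" using finite_same_card_bij assms(1-3) by blast
  let ?M = "(\<lambda>d. {d, f d}) ` D"
  have fD: "f d \<in> K" if "d \<in> D" for d using f that by (auto simp: bij_betw_def)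
  have disj: "e \<inter> e' = {}" if e: "e \<in> ?M" and e': "e' \<in> ?M" and ne: "e \<noteq> e'" for e e'
  proof -
    obtain d d' where d: "d \<in> D" "e = {d, f d}" and d': "d' \<in> D" "e' = {d', f d'}"
      using e e' by blast
    then have "d \<noteq> d'" using ne by blast
    then have "f d \<noteq> f d'" using d d' f by (auto simp: bij_betw_def inj_on_def)
    then show ?thesis using d d' fD \<open>D \<inter> K = {}\<close> \<open>d \<noteq> d'\<close> by blast
  qed
  have "perfect_matching (D \<union> K) E ?M"
    unfolding perfect_matching_def
  proof (intro conjI)
    show "\<forall>e\<in>?M. \<exists>u v. e = {u, v} \<and> E u v" using complete fD by blast
    show "\<forall>e\<in>?M. \<forall>e'\<in>?M. e \<noteq> e' \<longrightarrow> e \<inter> e' = {}" using disj by blast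
    show "\<Union>?M = D \<union> K" using f by (auto simp: bij_betw_def)
  qed
  then show thesis by (rule that)
qed

lemma perfect_matching_extend_twins:
  assumes g: "graph V E" and twins: "\<forall>d\<in>D. neighbours E d = K" and "D \<subseteq> V" and "K \<subseteq> V"
    and "card D = card K"
    and MW: "perfect_matching (V - D - K) (restrict_edges E (V - D - K)) MW"
  obtains M where "perfect_matching V E M"
proof -
  have finV: "finite V" using g by (simp add: graph_def)
  have "E d k" if "d \<in> D" and "k \<in> K" for d k
    using twins that by (auto simp: neighbours_def)
  then obtain MDK where MDK: "perfect_matching (D \<union> K) E MDK"
    using perfect_matching_complete_bipartite \<open>card D = card K\<close> twins_disjoint_neighbours[OF g twins]
      finite_subset[OF \<open>D \<subseteq> V\<close> finV] finite_subset[OF \<open>K \<subseteq> V\<close> finV] by metis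
  have "perfect_matching (V - D - K) E MW"
    using MW by (rule perfect_matching_mono) (simp add: restrict_edges_def)
  then have "perfect_matching ((V - D - K) \<union> (D \<union> K)) E (MW \<union> MDK)"
    using MDK by (rule perfect_matching_Un) blast
  moreover have "(V - D - K) \<union> (D \<union> K) = V" using \<open>D \<subseteq> V\<close> \<open>K \<subseteq> V\<close> by blast
  ultimately show thesis using that by simp
qed

text \<open>Induction on the number of vertices: remove the class D of vertices sharing the
  neighbourhood K of a vertex of minimum degree together with K. Maximal independent sets of
  the rest extend by D, so the rest is well-covered with independence number \<alpha> - |D|, and
  |D| \<le> |K| closes the count; equality forces |D| = |K|, and the complete bipartite graph between
  D and K supplies the missing matching edges.\<close>
lemma well_covered_perfect_matching_bound:
  assumes "graph V E" and "no_isolated_vertices V E"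
    and "\<forall>S. maximal_independent_set V E S \<longrightarrow> card S = m"
  shows "2 * m \<le> card V \<and> (2 * m = card V \<longrightarrow> (\<exists>M. perfect_matching V E M))"
  using assms
proof (induction "card V" arbitrary: V E m rule: less_induct)
  case less
  note g = less.prems(1) and ni = less.prems(2) and card_max = less.prems(3)
  have finV: "finite V" using g by (simp add: graph_def)
  show ?case
  proof (cases "V = {}")
    case True
    then have "maximal_independent_set V E {}"
      by (simp add: maximal_independent_set_def independent_set_def)
    then have "m = 0" using card_max by force
    moreover have "perfect_matching V E {}" using True by (simp add: perfect_matching_def)
    ultimately show ?thesis by auto
  next
    case False
    then obtain v where "v \<in> V" and min: "\<forall>x\<in>V. card (neighbours E v) \<le> card (neighbours E x)"
      using ex_has_least_nat[of "\<lambda>x. x \<in> V" _ "\<lambda>x. card (neighbours E x)"] by blast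
    define K where "K = neighbours E v"
    define D where "D = {x \<in> V. neighbours E x = neighbours E v}"
    define W where "W = V - D - K"
    have twins: "\<forall>d\<in>D. neighbours E d = K" by (simp add: D_def K_def)
    have "D \<subseteq> V" and "v \<in> D" and "K \<subseteq> V"
      using \<open>v \<in> V\<close> neighbours_subset[OF g] by (auto simp: D_def K_def)
    have "K \<noteq> {}"
      using ni \<open>v \<in> V\<close> by (auto simp: K_def neighbours_def no_isolated_vertices_def isolated_vertex_def)
    have DK: "D \<inter> K = {}" using twins_disjoint_neighbours[OF g twins] .
    have finD: "finite D" and finK: "finite K"
      using finV \<open>D \<subseteq> V\<close> \<open>K \<subseteq> V\<close> by (auto intro: finite_subset)
    have wc: "well_covered V E" using card_max by (simp add: well_covered_def)
    have "card D \<le> card K"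
      using well_covered_card_twins_le[OF g wc twins \<open>D \<subseteq> V\<close> \<open>K \<subseteq> V\<close> \<open>K \<noteq> {}\<close>] .
    have gW: "graph W (restrict_edges E W)" by (rule graph_restrict_edges[OF g]) (auto simp: W_def)
    have niW: "no_isolated_vertices W (restrict_edges E W)"
      using no_isolated_vertices_remove_twin_class[OF g min] by (simp add: W_def D_def K_def)
    have card_lift: "card J + card D = m" if "maximal_independent_set W (restrict_edges E W) J" for J
      using card_maximal_independent_set_remove_twins[OF g twins \<open>D \<subseteq> V\<close> _ card_max] \<open>v \<in> D\<close> that
      by (auto simp: W_def)
    obtain J0 where "maximal_independent_set W (restrict_edges E W) J0"
      using maximal_independent_set_exists[OF gW] .
    with card_lift have m: "m = (m - card D) + card D" by force
    have card_maxW: "\<forall>J. maximal_independent_set W (restrict_edges E W) J \<longrightarrow> card J = m - card D"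
      using card_lift by force
    have "card W < card V"
      using \<open>v \<in> D\<close> \<open>D \<subseteq> V\<close> finV by (intro psubset_card_mono) (auto simp: W_def)
    from less.hyps[OF this gW niW card_maxW]
    have IH: "2 * (m - card D) \<le> card W"
      "2 * (m - card D) = card W \<longrightarrow> (\<exists>M. perfect_matching W (restrict_edges E W) M)" by auto
    have "V = W \<union> (D \<union> K)" and "W \<inter> (D \<union> K) = {}" and "finite W"
      using \<open>D \<subseteq> V\<close> \<open>K \<subseteq> V\<close> finV by (auto simp: W_def)
    then have card_V: "card V = card W + card D + card K"
      using finD finK DK by (simp add: card_Un_disjoint)
    have bound: "2 * m \<le> card V" using IH(1) m card_V \<open>card D \<le> card K\<close> by linarith
    have "\<exists>M. perfect_matching V E M" if "2 * m = card V"
    proof -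
      have "card D = card K" and "2 * (m - card D) = card W"
        using IH(1) m card_V \<open>card D \<le> card K\<close> that by linarith+
      then obtain MW where "perfect_matching W (restrict_edges E W) MW" using IH(2) by blast
      then show ?thesis
        using perfect_matching_extend_twins[OF g twins \<open>D \<subseteq> V\<close> \<open>K \<subseteq> V\<close> \<open>card D = card K\<close>]
        by (auto simp: W_def)
    qed
    with bound show ?thesis by blast
  qed
qed

lemma very_well_covered_has_perfect_matching:
  assumes g: "graph V E" and "very_well_covered V E"
  obtains M where "perfect_matching V E M"
proof -
  have wc: "well_covered V E" and ni: "no_isolated_vertices V E"
    and alpha: "2 * independence_number V E = card V"
    using assms(2) by (auto simp: very_well_covered_def)
  have "\<forall>S. maximal_independent_set V E S \<longrightarrow> card S = independence_number V E"
    using well_covered_card_maximal_independent_set[OF g wc] by blast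
  then show thesis
    using well_covered_perfect_matching_bound[OF g ni] alpha that by blast
qed

theorem mainTheorem8:
  fixes V :: "'a set" and E :: "'a \<Rightarrow> 'a \<Rightarrow> bool"
  assumes "graph V E" and "triangle_free V E" and "no_isolated_vertices V E"
  shows "(localizable V E \<longleftrightarrow> very_well_covered V E)
    \<and> (very_well_covered V E \<longleftrightarrow>
         (\<exists>M. perfect_matching V E M \<and> (\<forall>e\<in>M. strong_clique V E e)))
    \<and> ((\<exists>M. perfect_matching V E M \<and> (\<forall>e\<in>M. strong_clique V E e)) \<longleftrightarrow>
         ((\<exists>M. perfect_matching V E M) \<and>
          (\<forall>M. perfect_matching V E M \<longrightarrow> (\<forall>e\<in>M. strong_clique V E e))))"
proof -
  let ?strong_matching = "\<exists>M. perfect_matching V E M \<and> (\<forall>e\<in>M. strong_clique V E e)"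
  let ?all_matchings_strong = "(\<exists>M. perfect_matching V E M) \<and>
    (\<forall>M. perfect_matching V E M \<longrightarrow> (\<forall>e\<in>M. strong_clique V E e))"
  have "?strong_matching \<Longrightarrow> very_well_covered V E"
    using very_well_covered_if_strong_perfect_matching[OF assms(1,3)] by blast
  moreover have "very_well_covered V E \<Longrightarrow> ?all_matchings_strong"
    using very_well_covered_has_perfect_matching[OF assms(1)]
      very_well_covered_perfect_matching_strong[OF assms(1)] by metis
  moreover have "?all_matchings_strong \<Longrightarrow> ?strong_matching" by blast
  ultimately show ?thesis using localizable_iff_strong_perfect_matching[OF assms] by blast
qed

end
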